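(* Let $G$ be an $r$-regular graph with $k$ vertices, and for $d\ge 1$ let $G^d$ denote the join of $d$ identical copies of $G$. Then there exists a natural number $d_0$ such that for all $d\ge d_0$, $G^d$ is a Ramanujan graph.
   Context: All graphs are finite, simple and undirected. The join of graphs $G_1,\ldots,G_d$ is obtained from their disjoint union by adding an edge between every vertex of $G_i$ and every vertex of $G_j$ for all $i\ne j$. A connected $r$-regular graph with adjacency eigenvalues $\lambda_1\ge\cdots\ge\lambda_m$ (so $|\lambda_i|\le r$) is a Ramanujan graph if $\max_{|\lambda_i|<r}|\lambda_i|\le 2\sqrt{r-1}$. *)

theory Defs
  imports Complex_Main
begin

definition simple_graph :: "'a set \<Rightarrow> ('a \<Rightarrow> 'a \<Rightarrow> bool) \<Rightarrow> bool" where
  "simple_graph V E \<longleftrightarrow> finite V \<and> (\<forall>u v. E u v \<longrightarrow> u \<in> V \<and> v \<in> V)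
     \<and> (\<forall>u v. E u v \<longrightarrow> E v u) \<and> (\<forall>u. \<not> E u u)"

definition neighbours :: "'a set \<Rightarrow> ('a \<Rightarrow> 'a \<Rightarrow> bool) \<Rightarrow> 'a \<Rightarrow> 'a set" where
  "neighbours V E v = {u \<in> V. E v u}"

definition regular :: "'a set \<Rightarrow> ('a \<Rightarrow> 'a \<Rightarrow> bool) \<Rightarrow> nat \<Rightarrow> bool" where
  "regular V E r \<longleftrightarrow> (\<forall>v\<in>V. card (neighbours V E v) = r)"

definition connected_graph :: "'a set \<Rightarrow> ('a \<Rightarrow> 'a \<Rightarrow> bool) \<Rightarrow> bool" where
  "connected_graph V E \<longleftrightarrow> V \<noteq> {} \<and> (\<forall>u\<in>V. \<forall>v\<in>V. E\<^sup>*\<^sup>* u v)"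

definition adj_eigenvalue :: "'a set \<Rightarrow> ('a \<Rightarrow> 'a \<Rightarrow> bool) \<Rightarrow> real \<Rightarrow> bool" where
  "adj_eigenvalue V E \<mu> \<longleftrightarrow> (\<exists>x :: 'a \<Rightarrow> real. (\<exists>v\<in>V. x v \<noteq> 0) \<and>
     (\<forall>v\<in>V. (\<Sum>u\<in>neighbours V E v. x u) = \<mu> * x v))"

definition ramanujan :: "'a set \<Rightarrow> ('a \<Rightarrow> 'a \<Rightarrow> bool) \<Rightarrow> bool" where
  "ramanujan V E \<longleftrightarrow> simple_graph V E \<and> connected_graph V E \<and>
     (\<exists>r::nat. regular V E r \<and>
        (\<forall>\<mu>. adj_eigenvalue V E \<mu> \<longrightarrow> \<bar>\<mu>\<bar> < real r \<longrightarrow> \<bar>\<mu>\<bar> \<le> 2 * sqrt (real r - 1)))"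

definition join_vertices :: "'a set \<Rightarrow> nat \<Rightarrow> ('a \<times> nat) set" where
  "join_vertices V d = V \<times> {..<d}"

definition join_edges :: "'a set \<Rightarrow> ('a \<Rightarrow> 'a \<Rightarrow> bool) \<Rightarrow> nat \<Rightarrow> ('a \<times> nat) \<Rightarrow> ('a \<times> nat) \<Rightarrow> bool" where
  "join_edges V E d = (\<lambda>(u,i) (v,j). u \<in> V \<and> v \<in> V \<and> i < d \<and> j < d \<and>
      (if i = j then E u v else True))"

end

theory Submission
  imports Defs
begin

text \<open>The join \<open>G\<^sup>d\<close> of \<open>d\<close> copies of an \<open>r\<close>-regular graph on \<open>k\<close> vertices is
  \<open>R\<close>-regular with \<open>R = r + k (d - 1)\<close>, and every vertex has all its non-neighbours in its
  own copy, hence at most \<open>k\<close> of them. An eigenvector \<open>x\<close> of a regular graph for an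
  eigenvalue \<open>\<mu> \<noteq> R\<close> is orthogonal to the all-ones vector, so at a vertex \<open>z\<close> where \<open>\<bar>x\<bar>\<close>
  is maximal, \<open>\<mu> x z\<close> equals minus the sum of \<open>x\<close> over the non-neighbours of \<open>z\<close>; thus
  \<open>\<bar>\<mu>\<bar> \<le> k\<close>. Since \<open>R\<close> grows linearly in \<open>d\<close>, eventually \<open>k \<le> 2 sqrt (R - 1)\<close>.\<close>

lemma simple_graph_finite: "simple_graph V E \<Longrightarrow> finite V"
  unfolding simple_graph_def by blast

lemma regular_eigenvector_sum_eq_0:
  fixes x :: "'a \<Rightarrow> real"
  assumes graph: "simple_graph V E" and reg: "regular V E R" and "\<mu> \<noteq> real R"
    and eigen: "\<forall>v\<in>V. (\<Sum>u\<in>neighbours V E v. x u) = \<mu> * x v"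
  shows "(\<Sum>v\<in>V. x v) = 0"
proof -
  have fin: "finite V" using graph by (rule simple_graph_finite)
  have "\<mu> * (\<Sum>v\<in>V. x v) = (\<Sum>v\<in>V. \<Sum>u\<in>{u\<in>V. E v u}. x u)"
    using eigen by (simp add: sum_distrib_left neighbours_def)
  also have "\<dots> = (\<Sum>u\<in>V. \<Sum>v\<in>{v\<in>V. E v u}. x u)"
    using fin fin by (rule sum.swap_restrict)
  also have "\<dots> = (\<Sum>u\<in>V. real R * x u)"
  proof (rule sum.cong[OF refl])
    fix u assume "u \<in> V"
    moreover have "{v\<in>V. E v u} = neighbours V E u"
      using graph unfolding neighbours_def simple_graph_def by blast
    ultimately show "(\<Sum>v\<in>{v\<in>V. E v u}. x u) = real R * x u"
      using reg unfolding regular_def by simp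
  qed
  finally have "\<mu> * (\<Sum>v\<in>V. x v) = real R * (\<Sum>v\<in>V. x v)"
    by (simp add: sum_distrib_left)
  then show ?thesis using \<open>\<mu> \<noteq> real R\<close> by simp
qed

lemma regular_eigenvalue_abs_le_card_non_neighbours:
  assumes graph: "simple_graph V E" and reg: "regular V E R"
    and eigen: "adj_eigenvalue V E \<mu>" and "\<mu> \<noteq> real R"
    and non_neighbours: "\<And>v. v \<in> V \<Longrightarrow> card (V - neighbours V E v) \<le> m"
  shows "\<bar>\<mu>\<bar> \<le> real m"
proof -
  have fin: "finite V" using graph by (rule simple_graph_finite)
  obtain x where nonzero: "\<exists>v\<in>V. x v \<noteq> 0"
    and eq: "\<forall>v\<in>V. (\<Sum>u\<in>neighbours V E v. x u) = \<mu> * x v"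
    using eigen unfolding adj_eigenvalue_def by blast
  have sum0: "(\<Sum>v\<in>V. x v) = 0"
    using regular_eigenvector_sum_eq_0[OF graph reg \<open>\<mu> \<noteq> real R\<close> eq] .
  define M where "M = Max ((\<lambda>v. \<bar>x v\<bar>) ` V)"
  have M_ge: "\<bar>x v\<bar> \<le> M" if "v \<in> V" for v
    using fin that unfolding M_def by simp
  obtain z where z: "z \<in> V" "\<bar>x z\<bar> = M"
    using Max_in[of "(\<lambda>v. \<bar>x v\<bar>) ` V"] fin nonzero unfolding M_def by fastforce
  have "M > 0" using nonzero M_ge by force
  let ?N = "neighbours V E z"
  have "?N \<subseteq> V" unfolding neighbours_def by blast
  then have "(\<Sum>v\<in>V. x v) = (\<Sum>v\<in>?N. x v) + (\<Sum>v\<in>V - ?N. x v)"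
    using fin by (metis add.commute sum.subset_diff)
  then have "\<mu> * x z = - (\<Sum>v\<in>V - ?N. x v)"
    using sum0 eq z(1) by simp
  then have "\<bar>\<mu>\<bar> * M = \<bar>\<Sum>v\<in>V - ?N. x v\<bar>"
    using z(2) by (metis abs_minus_cancel abs_mult)
  also have "\<dots> \<le> (\<Sum>v\<in>V - ?N. \<bar>x v\<bar>)" by (rule sum_abs)
  also have "\<dots> \<le> (\<Sum>v\<in>V - ?N. M)" using M_ge by (intro sum_mono) simp
  also have "\<dots> \<le> real m * M"
    using non_neighbours[OF z(1)] \<open>M > 0\<close> by simp
  finally show ?thesis using \<open>M > 0\<close> by simp
qed

lemma neighbours_join:
  assumes "v \<in> V" "i < d"
  shows "neighbours (join_vertices V d) (join_edges V E d) (v, i)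
     = neighbours V E v \<times> {i} \<union> V \<times> ({..<d} - {i})"
  using assms unfolding neighbours_def join_vertices_def join_edges_def by auto

lemma simple_graph_join:
  "simple_graph V E \<Longrightarrow> simple_graph (join_vertices V d) (join_edges V E d)"
  unfolding simple_graph_def join_vertices_def join_edges_def by auto

lemma regular_join:
  assumes graph: "simple_graph V E" and reg: "regular V E r"
  shows "regular (join_vertices V d) (join_edges V E d) (r + card V * (d - 1))"
  unfolding regular_def
proof
  fix w assume "w \<in> join_vertices V d"
  then obtain v i where w: "w = (v, i)" "v \<in> V" "i < d"
    unfolding join_vertices_def by auto
  have fin: "finite V" using graph by (rule simple_graph_finite)
  then have "finite (neighbours V E v)" unfolding neighbours_def by simp
  then have "card (neighbours V E v \<times> {i} \<union> V \<times> ({..<d} - {i}))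
      = card (neighbours V E v \<times> {i}) + card (V \<times> ({..<d} - {i}))"
    using fin by (intro card_Un_disjoint) auto
  also have "\<dots> = r + card V * (d - 1)"
    using reg w unfolding regular_def by (simp add: card_cartesian_product)
  finally show "card (neighbours (join_vertices V d) (join_edges V E d) w)
      = r + card V * (d - 1)"
    unfolding w(1) neighbours_join[OF w(2,3)] .
qed

lemma card_non_neighbours_join_le:
  assumes "finite V" and "w \<in> join_vertices V d"
  shows "card (join_vertices V d - neighbours (join_vertices V d) (join_edges V E d) w)
     \<le> card V"
proof -
  obtain v i where w: "w = (v, i)" "v \<in> V" "i < d"
    using assms(2) unfolding join_vertices_def by auto
  have "join_vertices V d - neighbours (join_vertices V d) (join_edges V E d) w \<subseteq> V \<times> {i}"
    unfolding w(1) neighbours_join[OF w(2,3)] by (auto simp: join_vertices_def)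
  then show ?thesis
    using card_mono[of "V \<times> {i}"] assms(1) by (simp add: card_cartesian_product)
qed

lemma connected_graph_join:
  assumes "V \<noteq> {}" "d \<ge> 2"
  shows "connected_graph (join_vertices V d) (join_edges V E d)"
  unfolding connected_graph_def
proof (intro conjI ballI)
  show "join_vertices V d \<noteq> {}"
    using assms unfolding join_vertices_def by (auto simp: lessThan_empty_iff)
next
  fix a b assume "a \<in> join_vertices V d" "b \<in> join_vertices V d"
  then obtain u i v j where a: "a = (u, i)" "u \<in> V" "i < d" and b: "b = (v, j)" "v \<in> V" "j < d"
    unfolding join_vertices_def by auto
  show "(join_edges V E d)\<^sup>*\<^sup>* a b"
  proof (cases "i = j")
    case False
    then show ?thesis using a b unfolding join_edges_def by auto
  next
    case True
    define l where "l = (if i = 0 then 1 else 0 :: nat)"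
    have "l < d" "l \<noteq> i" using assms(2) unfolding l_def by auto
    then have "join_edges V E d a (u, l)" "join_edges V E d (u, l) b"
      using a b True unfolding join_edges_def by auto
    then show ?thesis by (meson rtranclp.rtrancl_into_rtrancl r_into_rtranclp)
  qed
qed

lemma le_two_sqrt_join_degree_minus_1:
  fixes k r d :: nat
  assumes "k \<ge> 1" and "d \<ge> k + 2"
  shows "real k \<le> 2 * sqrt (real (r + k * (d - 1)) - 1)"
proof -
  have "k * (k + 1) \<le> k * (d - 1)" using assms(2) by (intro mult_le_mono2) linarith
  then have "k ^ 2 + 1 \<le> r + k * (d - 1)" using assms(1) by (simp add: power2_eq_square)
  then have "real (k ^ 2 + 1) \<le> real (r + k * (d - 1))" by (simp only: of_nat_le_iff)
  then have "real k ^ 2 \<le> real (r + k * (d - 1)) - 1" by simp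
  then show ?thesis using real_le_rsqrt by fastforce
qed

theorem mainTheorem6:
  fixes V :: "'a set" and E :: "'a \<Rightarrow> 'a \<Rightarrow> bool" and r k :: nat
  assumes "simple_graph V E" and "V \<noteq> {}" and "regular V E r" and "card V = k"
  shows "\<exists>d0::nat. \<forall>d\<ge>d0. d \<ge> 1 \<longrightarrow> ramanujan (join_vertices V d) (join_edges V E d)"
proof (intro exI allI impI)
  fix d :: nat assume d: "d \<ge> k + 2" "d \<ge> 1"
  let ?R = "r + k * (d - 1)"
  have "k \<ge> 1"
    using assms(2,4) simple_graph_finite[OF assms(1)] by (metis card_gt_0_iff Suc_le_eq One_nat_def)
  then have k_le: "real k \<le> 2 * sqrt (real ?R - 1)"
    using d(1) by (rule le_two_sqrt_join_degree_minus_1)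
  show "ramanujan (join_vertices V d) (join_edges V E d)"
    unfolding ramanujan_def
  proof (intro conjI exI[of _ ?R] allI impI)
    show graph: "simple_graph (join_vertices V d) (join_edges V E d)"
      using assms(1) by (rule simple_graph_join)
    show "connected_graph (join_vertices V d) (join_edges V E d)"
      using connected_graph_join[OF assms(2)] d(1) by simp
    show reg: "regular (join_vertices V d) (join_edges V E d) ?R"
      using regular_join[OF assms(1,3)] assms(4) by simp
    fix \<mu> assume "adj_eigenvalue (join_vertices V d) (join_edges V E d) \<mu>" "\<bar>\<mu>\<bar> < real ?R"
    then have "\<bar>\<mu>\<bar> \<le> real k"
      using regular_eigenvalue_abs_le_card_non_neighbours[OF graph reg]
        card_non_neighbours_join_le[OF simple_graph_finite[OF assms(1)]] assms(4)
      by fastforce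
    then show "\<bar>\<mu>\<bar> \<le> 2 * sqrt (real ?R - 1)" using k_le by linarith
  qed
qed

end
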